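(* In the setting below, for every $\varphi\in X_N$ and $x\in\mathbb{T}_N$: (i) $0\le(\Pi_x\varphi,\varphi)_+\le\sum_{y\in Q_-+x}(A\nabla\varphi(y),\nabla\varphi(y))$; (ii) $0\le(\mathcal{T}\varphi,\varphi)_+\le(\varphi,\varphi)_+$, and both inequalities are strict if $\varphi\ne0$; (iii) $(\mathcal{T}\varphi,\mathcal{T}\varphi)_+\le(\mathcal{T}\varphi,\varphi)_+$.
   Context: Standing: $d\ge2$, $m\ge1$, $L\ge3$ odd, $N\ge1$. $\mathbb{T}_N=(\mathbb{Z}/L^N\mathbb{Z})^d$. $X_N$: maps $\mathbb{T}_N\to\mathbb{R}^m$ with zero sum. $(\nabla_j\varphi)(x)=\varphi(x+e_j)-\varphi(x)$, $\nabla\varphi(x)\in\mathbb{R}^{m\times d}$. $A:\mathbb{R}^{m\times d}\to\mathbb{R}^{m\times d}$ linear, symmetric w.r.t. Frobenius inner product $(\cdot,\cdot)$, $(AF,F)\ge c_0|F|^2$, $c_0>0$; $(\varphi,\psi)_+=\sum_x(A\nabla\varphi(x),\nabla\psi(x))$. Let $l\ge3$ be an integer with $l-1<L^N$; $Q=\{1,\dots,l-1\}^d$, $Q_-=\{0,\dots,l-1\}^d$ in $\mathbb{T}_N$. $\Pi_x$ is the $(\cdot,\cdot)_+$-orthogonal projection of $X_N$ onto $\{\varphi\in X_N:\varphi=0\text{ outside }Q+x\}$; $\mathcal{T}=l^{-d}\sum_{x\in\mathbb{T}_N}\Pi_x$. *)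

theory Defs
  imports "HOL-Analysis.Analysis"
begin

text \<open>Torus points are represented by integer vectors in Z^d (index type 'd, d = CARD('d)),
  fields by M-periodic functions Z^d -> R^m (index type 'm), where M = L^N.\<close>

definition torus :: "nat \<Rightarrow> (int^'d) set" where
  "torus M = {x. \<forall>i. 0 \<le> x$i \<and> x$i < int M}"

definition periodic :: "nat \<Rightarrow> ((int^'d) \<Rightarrow> real^'m) \<Rightarrow> bool" where
  "periodic M \<phi> \<longleftrightarrow> (\<forall>x j. \<phi> (x + axis j (int M)) = \<phi> x)"

definition XN :: "nat \<Rightarrow> ((int^'d) \<Rightarrow> real^'m) set" where
  "XN M = {\<phi>. periodic M \<phi> \<and> (\<Sum>x\<in>torus M. \<phi> x) = 0}"

definition grad :: "((int^'d) \<Rightarrow> real^'m) \<Rightarrow> int^'d \<Rightarrow> real^'d^'m" where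
  "grad \<phi> x = (\<chi> a j. (\<phi> (x + axis j 1) - \<phi> x) $ a)"

definition eform :: "(real^'d^'m \<Rightarrow> real^'d^'m) \<Rightarrow> nat \<Rightarrow>
    ((int^'d) \<Rightarrow> real^'m) \<Rightarrow> ((int^'d) \<Rightarrow> real^'m) \<Rightarrow> real" where
  "eform A M \<phi> \<psi> = (\<Sum>x\<in>torus M. inner (A (grad \<phi> x)) (grad \<psi> x))"

definition tcong :: "nat \<Rightarrow> int^'d \<Rightarrow> int^'d \<Rightarrow> bool" where
  "tcong M x y \<longleftrightarrow> (\<forall>i. x$i mod int M = y$i mod int M)"

definition boxQ :: "nat \<Rightarrow> (int^'d) set" where
  "boxQ l = {q. \<forall>i. 1 \<le> q$i \<and> q$i \<le> int l - 1}"

definition boxQm :: "nat \<Rightarrow> (int^'d) set" where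
  "boxQm l = {q. \<forall>i. 0 \<le> q$i \<and> q$i \<le> int l - 1}"

definition Vsub :: "nat \<Rightarrow> nat \<Rightarrow> int^'d \<Rightarrow> ((int^'d) \<Rightarrow> real^'m) set" where
  "Vsub M l x = {\<psi>\<in>XN M. \<forall>y. (\<not> (\<exists>q\<in>boxQ l. tcong M y (q + x))) \<longrightarrow> \<psi> y = 0}"

definition Pi :: "(real^'d^'m \<Rightarrow> real^'d^'m) \<Rightarrow> nat \<Rightarrow> nat \<Rightarrow> int^'d \<Rightarrow>
    ((int^'d) \<Rightarrow> real^'m) \<Rightarrow> ((int^'d) \<Rightarrow> real^'m)" where
  "Pi A M l x \<phi> = (THE \<psi>. \<psi> \<in> Vsub M l x \<and> (\<forall>\<eta>\<in>Vsub M l x. eform A M (\<lambda>y. \<phi> y - \<psi> y) \<eta> = 0))"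

definition Top :: "(real^'d^'m \<Rightarrow> real^'d^'m) \<Rightarrow> nat \<Rightarrow> nat \<Rightarrow>
    ((int^'d) \<Rightarrow> real^'m) \<Rightarrow> ((int^'d) \<Rightarrow> real^'m)" where
  "Top A M l \<phi> = (\<lambda>y. (1 / real l ^ CARD('d)) *\<^sub>R (\<Sum>x\<in>torus M. Pi A M l x \<phi> y))"

end

theory Submission
  imports Defs
begin

text \<open>
  \<open>\<Pi>\<^sub>x\<close> is the \<open>(\<cdot>,\<cdot>)\<^sub>+\<close>-orthogonal projection onto maps supported in \<open>Q + x\<close>, whose
  gradients live in \<open>Q\<^sub>- + x\<close>. Hence \<open>(\<Pi>\<^sub>x\<phi>, \<phi>)\<^sub>+ = (\<Pi>\<^sub>x\<phi>, \<Pi>\<^sub>x\<phi>)\<^sub>+\<close>, and the energy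
  of \<open>\<phi>\<close> on \<open>Q\<^sub>- + x\<close> splits as that of \<open>\<Pi>\<^sub>x\<phi>\<close> plus that of the residual \<open>\<phi> - \<Pi>\<^sub>x\<phi>\<close>:
  this is (i). Every bond lies in exactly \<open>l\<^sup>d\<close> of the boxes \<open>Q\<^sub>- + x\<close>, so averaging (i)
  over \<open>x\<close> gives (ii); equality in either bound forces a rigidity (orthogonality to all local
  spaces, resp. vanishing residuals) that makes \<open>\<phi>\<close> constant, hence zero. The projections
  exist by Gram--Schmidt on finitely many unit-mass generators of each local space.
\<close>

section \<open>Periodic functions on the integer lattice\<close>

definition lattice_periodic :: "nat \<Rightarrow> (int^'d \<Rightarrow> 'b) \<Rightarrow> bool" where
  "lattice_periodic M f \<longleftrightarrow> (\<forall>x j. f (x + axis j (int M)) = f x)"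

definition torus_rep :: "nat \<Rightarrow> int^'d \<Rightarrow> int^'d" where
  "torus_rep M y = (\<chi> i. y$i mod int M)"

lemma periodic_iff_lattice_periodic: "periodic M \<phi> \<longleftrightarrow> lattice_periodic M \<phi>"
  by (simp add: periodic_def lattice_periodic_def)

lemma XN_lattice_periodic: "\<phi> \<in> XN M \<Longrightarrow> lattice_periodic M \<phi>"
  by (simp add: XN_def periodic_iff_lattice_periodic)

lemma shift_invariant_axis_multiples:
  fixes f :: "int^'d \<Rightarrow> 'b"
  assumes step: "\<And>y j. f (y + axis j c) = f y"
  shows "f (y + axis j (c * k)) = f y"
proof -
  have nat_multiples: "f (y + axis j (c * int n)) = f y" for n y
  proof (induction n arbitrary: y)
    case 0
    show ?case by (simp add: axis_def zero_vec_def[symmetric])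
  next
    case (Suc n)
    have "y + axis j (c * int (Suc n)) = (y + axis j (c * int n)) + axis j c"
      by (simp add: vec_eq_iff axis_def algebra_simps)
    then show ?case using step Suc.IH by (metis add.assoc)
  qed
  show ?thesis
  proof (cases "k \<ge> 0")
    case True
    then obtain n where "k = int n" by (metis nonneg_eq_int)
    then show ?thesis using nat_multiples by simp
  next
    case False
    then obtain n where k: "k = - int n" by (metis linorder_not_le neg_int_cases less_imp_le)
    have undo: "(y + axis j (c * k)) + axis j (c * int n) = y"
      by (simp add: k vec_eq_iff axis_def)
    have "f ((y + axis j (c * k)) + axis j (c * int n)) = f (y + axis j (c * k))"
      by (rule nat_multiples)
    then show ?thesis by (simp only: undo)
  qed
qed

lemma shift_invariant_lattice:
  fixes f :: "int^'d \<Rightarrow> 'b"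
  assumes step: "\<And>y j. f (y + axis j c) = f y"
  shows "f (y + (\<chi> i. c * k i)) = f y"
proof -
  have "f (y + (\<chi> i. if i \<in> J then c * k i else 0)) = f y" if "finite J" for J
    using that
  proof (induction J rule: finite_induct)
    case empty
    then show ?case by (simp add: zero_vec_def[symmetric])
  next
    case (insert j J)
    have "y + (\<chi> i. if i \<in> insert j J then c * k i else 0)
        = (y + (\<chi> i. if i \<in> J then c * k i else 0)) + axis j (c * k j)"
      using insert(2) by (auto simp: vec_eq_iff axis_def)
    also have "f \<dots> = f (y + (\<chi> i. if i \<in> J then c * k i else 0))"
      by (rule shift_invariant_axis_multiples[OF step])
    finally show ?case using insert.IH by simp
  qed
  from this[of UNIV] show ?thesis by simp
qed

lemma shift_invariant_const:
  fixes f :: "int^'d \<Rightarrow> 'b"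
  assumes "\<And>y j. f (y + axis j 1) = f y"
  shows "f y = f 0"
  using shift_invariant_lattice[OF assms, of 0 "vec_nth y"] by simp

lemma tcong_sym: "tcong M y z \<Longrightarrow> tcong M z y"
  by (simp add: tcong_def)

lemma tcong_trans: "tcong M x y \<Longrightarrow> tcong M y z \<Longrightarrow> tcong M x z"
  by (simp add: tcong_def)

lemma tcong_add_right: "tcong M a b \<Longrightarrow> tcong M (a + c) (b + c)"
  unfolding tcong_def by (metis vector_add_component mod_add_left_eq)

lemma tcong_add_right_iff [simp]: "tcong M (a + c) (b + c) \<longleftrightarrow> tcong M a b"
  using tcong_add_right[of M "a + c" "b + c" "- c"] tcong_add_right[of M a b c] by auto

lemma tcong_axis_period: "tcong M (y + axis j (int M)) y"
  by (simp add: tcong_def axis_def)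

lemma torus_rep_eq_iff: "torus_rep M a = torus_rep M b \<longleftrightarrow> tcong M a b"
  by (simp add: torus_rep_def tcong_def vec_eq_iff)

lemma tcong_torus_rep: "tcong M y (torus_rep M y)"
  by (simp add: torus_rep_def tcong_def)

lemma torus_rep_in_torus: "M > 0 \<Longrightarrow> torus_rep M y \<in> torus M"
  by (simp add: torus_rep_def torus_def)

lemma torus_rep_torus: "z \<in> torus M \<Longrightarrow> torus_rep M z = z"
  by (simp add: torus_rep_def torus_def vec_eq_iff)

lemma tcong_torus_iff: "z \<in> torus M \<Longrightarrow> tcong M y z \<longleftrightarrow> z = torus_rep M y"
  by (metis torus_rep_eq_iff torus_rep_torus)

lemma lattice_periodic_tcong:
  assumes "lattice_periodic M f" "tcong M y z"
  shows "f y = f z"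
proof -
  have "y$i = z$i + int M * (y$i div int M - z$i div int M)" for i
  proof -
    have "y$i mod int M = z$i mod int M" using assms(2) by (simp add: tcong_def)
    then show ?thesis
      using mult_div_mod_eq[of "int M" "y$i"] mult_div_mod_eq[of "int M" "z$i"]
      unfolding right_diff_distrib by linarith
  qed
  then have "y = z + (\<chi> i. int M * (y$i div int M - z$i div int M))"
    by (simp add: vec_eq_iff)
  also have "f \<dots> = f z"
    by (rule shift_invariant_lattice) (use assms(1) in \<open>simp add: lattice_periodic_def\<close>)
  finally show ?thesis .
qed

lemma lattice_periodic_torus_rep: "lattice_periodic M f \<Longrightarrow> f (torus_rep M y) = f y"
  using lattice_periodic_tcong tcong_torus_rep tcong_sym by metis

lemma cube_eq_image_PiE: "{x::int^'d. \<forall>i. x$i \<in> S} = vec_lambda ` (Pi\<^sub>E UNIV (\<lambda>_. S))"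
proof (rule set_eqI, rule iffI)
  fix x :: "int^'d" assume "x \<in> {x. \<forall>i. x$i \<in> S}"
  then have "vec_nth x \<in> Pi\<^sub>E UNIV (\<lambda>_. S)" by auto
  then show "x \<in> vec_lambda ` (Pi\<^sub>E UNIV (\<lambda>_. S))" by (metis image_eqI vec_nth_inverse)
qed auto

lemma finite_cube: "finite S \<Longrightarrow> finite {x::int^'d. \<forall>i. x$i \<in> S}"
  by (simp add: cube_eq_image_PiE finite_PiE)

lemma card_cube: "finite S \<Longrightarrow> card {x::int^'d. \<forall>i. x$i \<in> S} = card S ^ CARD('d)"
  by (simp add: cube_eq_image_PiE card_image card_PiE inj_on_def vec_lambda_inject)

lemma finite_torus [simp]: "finite (torus M)"
  using finite_cube[of "{0..<int M}"] by (simp add: torus_def)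

lemma finite_boxQm [simp]: "finite (boxQm l)"
  using finite_cube[of "{0..int l - 1}"] by (simp add: boxQm_def)

lemma card_boxQm: "card (boxQm l :: (int^'d) set) = l ^ CARD('d)"
  using card_cube[of "{0..int l - 1}"] by (simp add: boxQm_def)

lemma sum_torus_translate:
  assumes "lattice_periodic M f" "M > 0"
  shows "(\<Sum>z\<in>torus M. f (z + v)) = (\<Sum>z\<in>torus M. f z)"
proof -
  let ?h = "\<lambda>z. torus_rep M (z + v)"
  have inj: "inj_on ?h (torus M)"
  proof (rule inj_onI)
    fix a b assume "a \<in> torus M" "b \<in> torus M" "?h a = ?h b"
    then show "a = b"
      by (metis torus_rep_eq_iff tcong_add_right_iff tcong_torus_iff)
  qed
  then have "bij_betw ?h (torus M) (torus M)"
    using endo_inj_surj[OF finite_torus _ inj] torus_rep_in_torus[OF assms(2)]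
    by (auto simp: bij_betw_def)
  then have "(\<Sum>z\<in>torus M. f (?h z)) = (\<Sum>z\<in>torus M. f z)"
    by (rule sum.reindex_bij_betw)
  then show ?thesis using lattice_periodic_torus_rep[OF assms(1)] by simp
qed

lemma sum_torus_eq_sum_representatives:
  assumes "lattice_periodic M f" "M > 0" "finite S" "inj_on (torus_rep M) S"
    and "\<And>z. z \<in> torus M \<Longrightarrow> f z \<noteq> 0 \<Longrightarrow> \<exists>y\<in>S. tcong M z y"
  shows "(\<Sum>z\<in>torus M. f z) = (\<Sum>y\<in>S. f y)"
proof -
  have "(\<Sum>y\<in>S. f y) = (\<Sum>y\<in>S. f (torus_rep M y))"
    using lattice_periodic_torus_rep[OF assms(1)] by simp
  also have "\<dots> = (\<Sum>z\<in>torus_rep M ` S. f z)"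
    using sum.reindex[OF assms(4), of f] by (simp add: o_def)
  also have "\<dots> = (\<Sum>z\<in>torus M. f z)"
  proof (rule sum.mono_neutral_left)
    show "torus_rep M ` S \<subseteq> torus M" using torus_rep_in_torus assms(2) by auto
    show "\<forall>z\<in>torus M - torus_rep M ` S. f z = 0"
    proof (intro ballI, rule ccontr)
      fix z assume z: "z \<in> torus M - torus_rep M ` S" and "f z \<noteq> 0"
      then obtain y where "y \<in> S" "tcong M z y" using assms(5) by blast
      then show False using z tcong_torus_iff[of z M y] tcong_sym by blast
    qed
  qed simp
  finally show ?thesis by simp
qed

lemma lattice_periodic_step_const:
  assumes "lattice_periodic M f" "M > 0" "\<And>z j. z \<in> torus M \<Longrightarrow> f (z + axis j 1) = f z"
  shows "f y = f 0"
proof (rule shift_invariant_const)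
  fix y j
  have "f (y + axis j 1) = f (torus_rep M y + axis j 1)"
    by (rule lattice_periodic_tcong[OF assms(1) tcong_add_right[OF tcong_torus_rep]])
  also have "\<dots> = f (torus_rep M y)"
    by (rule assms(3)[OF torus_rep_in_torus[OF assms(2)]])
  also have "\<dots> = f y"
    by (rule lattice_periodic_torus_rep[OF assms(1)])
  finally show "f (y + axis j 1) = f y" .
qed

lemma XN_step_const_eq_0:
  fixes \<phi> :: "int^'d \<Rightarrow> real^'m"
  assumes "\<phi> \<in> XN M" "M > 0" "\<And>z j. z \<in> torus M \<Longrightarrow> \<phi> (z + axis j 1) = \<phi> z"
  shows "\<phi> = (\<lambda>_. 0)"
proof -
  have const: "\<phi> y = \<phi> 0" for y
    by (rule lattice_periodic_step_const[OF XN_lattice_periodic[OF assms(1)] assms(2,3)])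
  have "0 \<in> torus M" using assms(2) by (simp add: torus_def)
  then have card: "card (torus M :: (int^'d) set) \<noteq> 0"
    using finite_torus by (metis card_0_eq empty_iff)
  have "real (card (torus M :: (int^'d) set)) *\<^sub>R \<phi> 0 = (\<Sum>w\<in>(torus M :: (int^'d) set). \<phi> 0)"
    by (rule sum_constant_scaleR[symmetric])
  also have "\<dots> = (\<Sum>w\<in>torus M. \<phi> w)"
    by (rule sum.cong[OF refl], rule const[symmetric])
  also have "\<dots> = 0"
    using assms(1) by (simp add: XN_def)
  finally have "\<phi> 0 = 0" using card by simp
  then show ?thesis using const by (intro ext) metis
qed

lemma XN_lincomb:
  assumes "finite I" "\<And>i. i \<in> I \<Longrightarrow> g i \<in> XN M"
  shows "(\<lambda>y. \<Sum>i\<in>I. a i *\<^sub>R g i y) \<in> XN M"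
proof -
  have "(\<Sum>w\<in>torus M. \<Sum>i\<in>I. a i *\<^sub>R g i w) = (\<Sum>i\<in>I. a i *\<^sub>R (\<Sum>w\<in>torus M. g i w))"
    by (simp add: sum.swap[of _ "torus M"] scaleR_sum_right)
  also have "\<dots> = 0" using assms(2) by (simp add: XN_def)
  finally show ?thesis
    using assms(2) by (simp add: XN_def periodic_def)
qed

section \<open>The energy form\<close>

lemma grad_diff: "grad (\<lambda>y. f y - g y) z = grad f z - grad g z"
  by (simp add: grad_def vec_eq_iff algebra_simps)

lemma grad_add: "grad (\<lambda>y. f y + g y) z = grad f z + grad g z"
  by (simp add: grad_def vec_eq_iff algebra_simps)

lemma grad_scaleR: "grad (\<lambda>y. c *\<^sub>R f y) z = c *\<^sub>R grad f z"
  by (simp add: grad_def vec_eq_iff algebra_simps)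

lemma grad_sum: "grad (\<lambda>y. \<Sum>i\<in>I. f i y) z = (\<Sum>i\<in>I. grad (f i) z)"
  by (simp add: grad_def vec_eq_iff sum_component sum_subtractf)

lemma grad_column_eq_0_iff: "(\<forall>a. grad f z $ a $ j = 0) \<longleftrightarrow> f (z + axis j 1) = f z"
  by (auto simp: grad_def vec_eq_iff)

lemma lattice_periodic_grad:
  fixes f :: "int^'d \<Rightarrow> real^'m"
  assumes "lattice_periodic M f" shows "lattice_periodic M (grad f)"
  unfolding lattice_periodic_def
proof (intro allI)
  fix x :: "int^'d" and j
  have "f (x + axis j (int M) + axis k 1) = f (x + axis k 1)" for k
    using assms unfolding lattice_periodic_def
    by (metis add.assoc add.commute[of "axis j (int M)" "axis k 1"])
  then show "grad f (x + axis j (int M)) = grad f x"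
    using assms by (simp add: grad_def lattice_periodic_def)
qed

locale coercive_form =
  fixes A :: "real^'d^'m \<Rightarrow> real^'d^'m" and c0 :: real
  assumes linear: "linear A"
    and symmetric: "\<And>F G. inner (A F) G = inner F (A G)"
    and c0_pos: "c0 > 0"
    and coercive: "\<And>F. inner (A F) F \<ge> c0 * (norm F)\<^sup>2"
begin

abbreviation energy :: "nat \<Rightarrow> (int^'d \<Rightarrow> real^'m) \<Rightarrow> (int^'d \<Rightarrow> real^'m) \<Rightarrow> real" where
  "energy M \<equiv> eform A M"

lemma inner_A_commute: "inner (A F) G = inner (A G) F"
  by (metis symmetric inner_commute)

lemma inner_A_nonneg: "inner (A F) F \<ge> 0"
  using coercive[of F] c0_pos by (smt (verit) mult_nonneg_nonneg zero_le_power2)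

lemma inner_A_eq_0_iff: "inner (A F) F = 0 \<longleftrightarrow> F = 0"
proof
  assume "inner (A F) F = 0"
  then have "c0 * (norm F)\<^sup>2 \<le> 0" using coercive[of F] by simp
  then show "F = 0" using c0_pos by (simp add: mult_le_0_iff)
qed (simp add: linear_0[OF linear])

lemma inner_A_diff:
  "inner (A (F - G)) (F - G) = inner (A F) F - 2 * inner (A G) F + inner (A G) G"
  using inner_A_commute[of F G]
  by (simp add: linear_diff[OF linear] inner_diff_left inner_diff_right)

lemma lattice_periodic_energy_density:
  "lattice_periodic M f \<Longrightarrow> lattice_periodic M g \<Longrightarrow>
    lattice_periodic M (\<lambda>z. inner (A (grad f z)) (grad g z))"
  using lattice_periodic_grad[of M f] lattice_periodic_grad[of M g]
  by (simp add: lattice_periodic_def)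

lemma energy_commute: "energy M f g = energy M g f"
  unfolding eform_def using inner_A_commute by simp

lemma energy_diff_left: "energy M (\<lambda>y. f y - g y) h = energy M f h - energy M g h"
  unfolding eform_def
  by (simp add: grad_diff linear_diff[OF linear] inner_diff_left sum_subtractf)

lemma energy_diff_right: "energy M h (\<lambda>y. f y - g y) = energy M h f - energy M h g"
  by (simp add: energy_commute[of M h] energy_diff_left)

lemma energy_add_left: "energy M (\<lambda>y. f y + g y) h = energy M f h + energy M g h"
  unfolding eform_def
  by (simp add: grad_add linear_add[OF linear] inner_add_left sum.distrib)

lemma energy_scaleR_left: "energy M (\<lambda>y. c *\<^sub>R f y) h = c * energy M f h"
  unfolding eform_def by (simp add: grad_scaleR linear_scale[OF linear] sum_distrib_left)

lemma energy_lincomb_left: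
  "energy M (\<lambda>y. \<Sum>i\<in>I. a i *\<^sub>R g i y) h = (\<Sum>i\<in>I. a i * energy M (g i) h)"
  unfolding eform_def
  by (simp add: grad_sum grad_scaleR linear_sum[OF linear] linear_scale[OF linear]
      inner_sum_left sum_distrib_left sum.swap[of _ I])

lemma energy_lincomb_right:
  "energy M h (\<lambda>y. \<Sum>i\<in>I. a i *\<^sub>R g i y) = (\<Sum>i\<in>I. a i * energy M h (g i))"
  by (simp add: energy_commute[of M h] energy_lincomb_left)

lemma energy_nonneg: "energy M f f \<ge> 0"
  unfolding eform_def by (rule sum_nonneg) (rule inner_A_nonneg)

lemma energy_diff_self:
  "energy M (\<lambda>y. f y - g y) (\<lambda>y. f y - g y) = energy M f f - 2 * energy M f g + energy M g g"
  by (simp add: energy_diff_left energy_diff_right energy_commute[of M g f])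

lemma energy_eq_0_imp_eq_0:
  fixes \<phi> :: "int^'d \<Rightarrow> real^'m"
  assumes "\<phi> \<in> XN M" "M > 0" "energy M \<phi> \<phi> = 0"
  shows "\<phi> = (\<lambda>_. 0)"
proof (rule XN_step_const_eq_0[OF assms(1,2)])
  fix z :: "int^'d" and j assume "z \<in> torus M"
  then have "inner (A (grad \<phi> z)) (grad \<phi> z) = 0"
    using assms(3) inner_A_nonneg
      sum_nonneg_eq_0_iff[OF finite_torus, of M "\<lambda>x. inner (A (grad \<phi> x)) (grad \<phi> x)"]
    by (simp add: eform_def)
  then show "\<phi> (z + axis j 1) = \<phi> z"
    by (simp add: inner_A_eq_0_iff flip: grad_column_eq_0_iff)
qed

end

section \<open>Orthogonal projections onto finitely spanned function spaces\<close>

definition fun_span :: "'i set \<Rightarrow> ('i \<Rightarrow> 'x \<Rightarrow> 'v::real_vector) \<Rightarrow> ('x \<Rightarrow> 'v) set" where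
  "fun_span I g = {f. \<exists>a. f = (\<lambda>y. \<Sum>i\<in>I. a i *\<^sub>R g i y)}"

definition is_orth_proj ::
    "(('x \<Rightarrow> 'v::real_vector) \<Rightarrow> ('x \<Rightarrow> 'v) \<Rightarrow> real) \<Rightarrow> ('x \<Rightarrow> 'v) set \<Rightarrow>
      ('x \<Rightarrow> 'v) \<Rightarrow> ('x \<Rightarrow> 'v) \<Rightarrow> bool" where
  "is_orth_proj B V \<phi> \<psi> \<longleftrightarrow> \<psi> \<in> V \<and> (\<forall>\<eta>\<in>V. B (\<lambda>y. \<phi> y - \<psi> y) \<eta> = 0)"

lemma fun_span_insert:
  assumes "finite I" "i \<notin> I"
  shows "f \<in> fun_span (insert i I) g \<longleftrightarrow> (\<exists>h\<in>fun_span I g. \<exists>t. f = (\<lambda>y. h y + t *\<^sub>R g i y))"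
proof
  assume "f \<in> fun_span (insert i I) g"
  then obtain a where "f = (\<lambda>y. \<Sum>k\<in>insert i I. a k *\<^sub>R g k y)" by (auto simp: fun_span_def)
  then have "f = (\<lambda>y. (\<Sum>k\<in>I. a k *\<^sub>R g k y) + a i *\<^sub>R g i y)"
    using assms by (simp add: add.commute)
  then show "\<exists>h\<in>fun_span I g. \<exists>t. f = (\<lambda>y. h y + t *\<^sub>R g i y)" by (auto simp: fun_span_def)
next
  assume "\<exists>h\<in>fun_span I g. \<exists>t. f = (\<lambda>y. h y + t *\<^sub>R g i y)"
  then obtain a t where f: "f = (\<lambda>y. (\<Sum>k\<in>I. a k *\<^sub>R g k y) + t *\<^sub>R g i y)"
    by (auto simp: fun_span_def)
  have "(\<Sum>k\<in>I. a k *\<^sub>R g k y) = (\<Sum>k\<in>I. (a(i := t)) k *\<^sub>R g k y)" for y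
    using assms(2) by (intro sum.cong) auto
  then have "f = (\<lambda>y. \<Sum>k\<in>insert i I. (a(i := t)) k *\<^sub>R g k y)"
    using assms by (simp add: f add.commute)
  then show "f \<in> fun_span (insert i I) g" by (auto simp: fun_span_def)
qed

lemma fun_span_lincomb:
  assumes "h1 \<in> fun_span I g" "h2 \<in> fun_span I g"
  shows "(\<lambda>y. p *\<^sub>R h1 y + q *\<^sub>R h2 y) \<in> fun_span I g"
proof -
  obtain a1 a2 where "h1 = (\<lambda>y. \<Sum>i\<in>I. a1 i *\<^sub>R g i y)" "h2 = (\<lambda>y. \<Sum>i\<in>I. a2 i *\<^sub>R g i y)"
    using assms by (auto simp: fun_span_def)
  then have "(\<lambda>y. p *\<^sub>R h1 y + q *\<^sub>R h2 y) = (\<lambda>y. \<Sum>i\<in>I. (p * a1 i + q * a2 i) *\<^sub>R g i y)"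
    by (simp add: scaleR_sum_right sum.distrib[symmetric] scaleR_add_left)
  then show ?thesis by (auto simp: fun_span_def)
qed

lemma fun_span_zero: "(\<lambda>_. 0) \<in> fun_span I g"
  by (auto simp: fun_span_def intro!: exI[of _ "\<lambda>_. 0"])

lemma fun_span_subset_insert:
  assumes "finite I" "i \<notin> I" shows "fun_span I g \<subseteq> fun_span (insert i I) g"
proof
  fix f assume "f \<in> fun_span I g"
  moreover have "f = (\<lambda>y. f y + 0 *\<^sub>R g i y)" by simp
  ultimately show "f \<in> fun_span (insert i I) g" using fun_span_insert[OF assms] by blast
qed

lemma fun_span_insert_generator: "finite I \<Longrightarrow> i \<notin> I \<Longrightarrow> g i \<in> fun_span (insert i I) g"
  using fun_span_zero by (fastforce simp: fun_span_insert intro!: exI[of _ 1])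

lemma fun_span_insert_diff:
  assumes "finite I" "i \<notin> I" "\<psi> \<in> fun_span I g"
  shows "(\<lambda>y. g i y - \<psi> y) \<in> fun_span (insert i I) g"
proof -
  have "\<psi> \<in> fun_span (insert i I) g" using fun_span_subset_insert[OF assms(1,2)] assms(3) by blast
  then have "(\<lambda>y. 1 *\<^sub>R g i y + (-1) *\<^sub>R \<psi> y) \<in> fun_span (insert i I) g"
    by (rule fun_span_lincomb[OF fun_span_insert_generator[OF assms(1,2)]])
  then show ?thesis by simp
qed

lemma fun_span_insert_decomp:
  assumes "finite I" "i \<notin> I" "\<psi> \<in> fun_span I g" "\<eta> \<in> fun_span (insert i I) g"
  shows "\<exists>h\<in>fun_span I g. \<exists>t. \<eta> = (\<lambda>y. 1 *\<^sub>R h y + t *\<^sub>R (g i y - \<psi> y))"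
proof -
  obtain h t where h: "h \<in> fun_span I g" "\<eta> = (\<lambda>y. h y + t *\<^sub>R g i y)"
    using assms(4) fun_span_insert[OF assms(1,2)] by blast
  let ?h = "\<lambda>y. 1 *\<^sub>R h y + t *\<^sub>R \<psi> y"
  have "\<eta> = (\<lambda>y. 1 *\<^sub>R ?h y + t *\<^sub>R (g i y - \<psi> y))"
    by (simp add: h(2) algebra_simps)
  then show ?thesis
    by (intro bexI[of _ ?h] fun_span_lincomb[OF h(1) assms(3)]) blast
qed

locale symmetric_bilinear_fun_form =
  fixes B :: "('x \<Rightarrow> 'v::real_vector) \<Rightarrow> ('x \<Rightarrow> 'v) \<Rightarrow> real"
  assumes add_left: "\<And>f g h. B (\<lambda>y. f y + g y) h = B f h + B g h"
    and scaleR_left: "\<And>c f h. B (\<lambda>y. c *\<^sub>R f y) h = c * B f h"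
    and commute: "\<And>f g. B f g = B g f"
begin

lemma lincomb_left: "B (\<lambda>y. p *\<^sub>R f y + q *\<^sub>R f' y) h = p * B f h + q * B f' h"
  using add_left scaleR_left by simp

lemma lincomb_right: "B h (\<lambda>y. p *\<^sub>R f y + q *\<^sub>R f' y) = p * B h f + q * B h f'"
  by (simp add: commute[of h] lincomb_left)

lemma diff_left: "B (\<lambda>y. f y - g y) h = B f h - B g h"
  using lincomb_left[of 1 f "-1" g h] by simp

lemma zero_right: "B f (\<lambda>_. 0) = 0"
  using lincomb_right[of f 0 f 0 f] by simp

lemma is_orth_proj_unique:
  assumes diff_closed: "\<And>f g. f \<in> V \<Longrightarrow> g \<in> V \<Longrightarrow> (\<lambda>y. f y - g y) \<in> V"
    and definite: "\<And>v. v \<in> V \<Longrightarrow> B v v = 0 \<Longrightarrow> v = (\<lambda>_. 0)"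
    and "is_orth_proj B V \<phi> \<psi>1" "is_orth_proj B V \<phi> \<psi>2"
  shows "\<psi>1 = \<psi>2"
proof -
  define d where "d = (\<lambda>y. \<psi>1 y - \<psi>2 y)"
  have dV: "d \<in> V" using assms(3,4) diff_closed by (simp add: d_def is_orth_proj_def)
  have "d = (\<lambda>y. (\<phi> y - \<psi>2 y) - (\<phi> y - \<psi>1 y))" by (simp add: d_def)
  then have "B d d = B (\<lambda>y. \<phi> y - \<psi>2 y) d - B (\<lambda>y. \<phi> y - \<psi>1 y) d"
    by (simp only: diff_left)
  also have "\<dots> = 0" using assms(3,4) dV by (simp add: is_orth_proj_def)
  finally have "d = (\<lambda>_. 0)" using definite dV by blast
  then show ?thesis by (simp add: d_def fun_eq_iff)
qed

text \<open>Gram--Schmidt step: the projection onto \<open>span (insert i I)\<close> corrects the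
  projection onto \<open>span I\<close> along the component \<open>w\<close> of \<open>g i\<close> orthogonal to \<open>span I\<close>.\<close>

lemma is_orth_proj_insert:
  assumes "finite I" "i \<notin> I"
    and proj: "\<And>\<phi>. \<exists>\<psi>. is_orth_proj B (fun_span I g) \<phi> \<psi>"
    and definite: "\<And>v. v \<in> fun_span (insert i I) g \<Longrightarrow> B v v = 0 \<Longrightarrow> v = (\<lambda>_. 0)"
  shows "\<exists>\<psi>. is_orth_proj B (fun_span (insert i I) g) \<phi> \<psi>"
proof -
  let ?U = "fun_span I g" and ?V = "fun_span (insert i I) g"
  have UV: "?U \<subseteq> ?V" by (rule fun_span_subset_insert[OF assms(1,2)])
  obtain \<psi>g where \<psi>g: "is_orth_proj B ?U (g i) \<psi>g" using proj by blast
  obtain \<psi>' where \<psi>': "is_orth_proj B ?U \<phi> \<psi>'" using proj by blast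
  define w where "w = (\<lambda>y. g i y - \<psi>g y)"
  define c where "c = B (\<lambda>y. \<phi> y - \<psi>' y) w / B w w"
  have \<psi>gU: "\<psi>g \<in> ?U" using \<psi>g by (simp add: is_orth_proj_def)
  have wV: "w \<in> ?V" unfolding w_def by (rule fun_span_insert_diff[OF assms(1,2) \<psi>gU])
  \<comment> \<open>If \<open>B w w = 0\<close> then \<open>w = 0\<close>, so the junk value \<open>c = 0\<close> is harmless.\<close>
  have c_eq: "B (\<lambda>y. \<phi> y - \<psi>' y) w = c * B w w"
  proof (cases "B w w = 0")
    case True
    then show ?thesis using definite[OF wV] zero_right by simp
  qed (simp add: c_def)
  show ?thesis unfolding is_orth_proj_def
  proof (intro exI conjI)
    show "(\<lambda>y. 1 *\<^sub>R \<psi>' y + c *\<^sub>R w y) \<in> ?V"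
      using UV \<psi>' by (intro fun_span_lincomb[OF _ wV]) (auto simp: is_orth_proj_def)
    show "\<forall>\<eta>\<in>?V. B (\<lambda>y. \<phi> y - (1 *\<^sub>R \<psi>' y + c *\<^sub>R w y)) \<eta> = 0"
    proof
      fix \<eta> assume "\<eta> \<in> ?V"
      then obtain h t where h: "h \<in> ?U" and \<eta>: "\<eta> = (\<lambda>y. 1 *\<^sub>R h y + t *\<^sub>R w y)"
        using fun_span_insert_decomp[OF assms(1,2) \<psi>gU] unfolding w_def by blast
      have w_orth: "B w h = 0" using \<psi>g h by (simp add: is_orth_proj_def w_def)
      have res_orth: "B (\<lambda>y. \<phi> y - \<psi>' y) h = 0" using \<psi>' h by (simp add: is_orth_proj_def)
      have "(\<lambda>y. \<phi> y - (1 *\<^sub>R \<psi>' y + c *\<^sub>R w y)) = (\<lambda>y. 1 *\<^sub>R (\<phi> y - \<psi>' y) + (- c) *\<^sub>R w y)"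
        by (simp add: algebra_simps)
      then have "B (\<lambda>y. \<phi> y - (1 *\<^sub>R \<psi>' y + c *\<^sub>R w y)) \<eta>
          = B (\<lambda>y. \<phi> y - \<psi>' y) \<eta> - c * B w \<eta>"
        by (simp only: lincomb_left)
      also have "\<dots> = t * (B (\<lambda>y. \<phi> y - \<psi>' y) w - c * B w w)"
        unfolding \<eta> lincomb_right res_orth w_orth by (simp add: algebra_simps)
      finally show "B (\<lambda>y. \<phi> y - (1 *\<^sub>R \<psi>' y + c *\<^sub>R w y)) \<eta> = 0"
        using c_eq by simp
    qed
  qed
qed

lemma is_orth_proj_exists:
  assumes "finite I"
    and "\<And>v. v \<in> fun_span I g \<Longrightarrow> B v v = 0 \<Longrightarrow> v = (\<lambda>_. 0)"
  shows "\<exists>\<psi>. is_orth_proj B (fun_span I g) \<phi> \<psi>"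
  using assms
proof (induction I arbitrary: \<phi> rule: finite_induct)
  case empty
  have "fun_span {} g = {\<lambda>_. 0}" by (simp add: fun_span_def)
  then show ?case by (auto simp: is_orth_proj_def zero_right)
next
  case (insert i I)
  show ?case
  proof (rule is_orth_proj_insert[OF insert.hyps(1,2)])
    show "\<exists>\<psi>. is_orth_proj B (fun_span I g) \<phi>' \<psi>" for \<phi>'
      using insert.IH insert.prems fun_span_subset_insert[OF insert.hyps(1,2)] by blast
  qed (use insert.prems in blast)
qed

end

section \<open>The local spaces\<close>

definition point_mass :: "nat \<Rightarrow> int^'d \<Rightarrow> 'm \<Rightarrow> int^'d \<Rightarrow> real^'m" where
  "point_mass M z c y = (if tcong M y z then axis c 1 else 0)"

lemma lattice_periodic_point_mass: "lattice_periodic M (point_mass M z c)"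
  unfolding lattice_periodic_def point_mass_def
  using tcong_axis_period tcong_trans tcong_sym by metis

lemma sum_point_mass:
  assumes "M > 0" shows "(\<Sum>w\<in>torus M. point_mass M z c w) = axis c 1"
proof -
  have "(\<Sum>w\<in>torus M. point_mass M z c w)
      = (\<Sum>w\<in>torus M. if w = torus_rep M z then axis c 1 else 0)"
    by (intro sum.cong refl) (metis point_mass_def tcong_sym tcong_torus_iff)
  also have "\<dots> = axis c 1" using torus_rep_in_torus[OF assms] by simp
  finally show ?thesis .
qed

lemma point_mass_diff_XN:
  assumes "M > 0" shows "(\<lambda>y. point_mass M z c y - point_mass M z' c y) \<in> XN M"
  using lattice_periodic_point_mass[of M z c] lattice_periodic_point_mass[of M z' c]
  by (simp add: XN_def periodic_def lattice_periodic_def sum_subtractf sum_point_mass[OF assms])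

lemma sum_point_mass_components:
  "(\<Sum>c\<in>UNIV. (v$c) *\<^sub>R point_mass M z c y) = (if tcong M y z then v else 0)"
  using basis_expansion[of v] by (simp add: point_mass_def scalar_mult_eq_scaleR)

lemma XN_point_mass_expansion:
  fixes \<psi> :: "int^'d \<Rightarrow> real^'m"
  assumes "\<psi> \<in> XN M" "M > 0" "R \<subseteq> torus M" "\<And>z. z \<in> torus M - R \<Longrightarrow> \<psi> z = 0"
  shows "\<psi> = (\<lambda>y. \<Sum>p\<in>R \<times> UNIV.
            (\<psi> (fst p) $ snd p) *\<^sub>R (point_mass M (fst p) (snd p) y - point_mass M z0 (snd p) y))"
proof
  fix y
  have fin: "finite R" using finite_subset[OF assms(3) finite_torus] .
  have sum_R: "(\<Sum>z\<in>R. \<psi> z) = 0"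
    using assms(1,3,4) by (simp add: XN_def sum.mono_neutral_left[OF finite_torus])
  have "(\<Sum>p\<in>R \<times> UNIV. (\<psi> (fst p) $ snd p) *\<^sub>R point_mass M (fst p) (snd p) y)
      = (\<Sum>z\<in>R. \<Sum>c\<in>UNIV. (\<psi> z $ c) *\<^sub>R point_mass M z c y)"
    by (simp add: sum.cartesian_product case_prod_unfold)
  also have "\<dots> = (\<Sum>z\<in>R. if tcong M y z then \<psi> z else 0)"
    by (simp add: sum_point_mass_components)
  also have "\<dots> = (\<Sum>z\<in>R. if z = torus_rep M y then \<psi> z else 0)"
  proof (rule sum.cong[OF refl])
    fix z assume "z \<in> R"
    then have "tcong M y z \<longleftrightarrow> z = torus_rep M y" using assms(3) tcong_torus_iff by blast
    then show "(if tcong M y z then \<psi> z else 0) = (if z = torus_rep M y then \<psi> z else 0)"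
      by simp
  qed
  also have "\<dots> = \<psi> y"
    using fin assms(4)[of "torus_rep M y"] torus_rep_in_torus[OF assms(2)]
      lattice_periodic_torus_rep[OF XN_lattice_periodic[OF assms(1)]]
    by auto
  finally have pm: "(\<Sum>p\<in>R \<times> UNIV. (\<psi> (fst p) $ snd p) *\<^sub>R point_mass M (fst p) (snd p) y) = \<psi> y" .
  have "(\<Sum>p\<in>R \<times> UNIV. (\<psi> (fst p) $ snd p) *\<^sub>R point_mass M z0 (snd p) y)
      = (\<Sum>z\<in>R. \<Sum>c\<in>UNIV. (\<psi> z $ c) *\<^sub>R point_mass M z0 c y)"
    by (simp add: sum.cartesian_product case_prod_unfold)
  also have "\<dots> = 0"
    using sum_R by (cases "tcong M y z0") (simp_all add: sum_point_mass_components)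
  finally have pm0: "(\<Sum>p\<in>R \<times> UNIV. (\<psi> (fst p) $ snd p) *\<^sub>R point_mass M z0 (snd p) y) = 0" .
  show "\<psi> y = (\<Sum>p\<in>R \<times> UNIV.
            (\<psi> (fst p) $ snd p) *\<^sub>R (point_mass M (fst p) (snd p) y - point_mass M z0 (snd p) y))"
    using pm pm0 by (simp add: scaleR_diff_right sum_subtractf)
qed

lemma one_in_boxQ: "2 \<le> l \<Longrightarrow> 1 \<in> boxQ l"
  by (simp add: boxQ_def)

lemma one_plus_axis_in_boxQ: "3 \<le> l \<Longrightarrow> 1 + axis j 1 \<in> boxQ l"
  by (auto simp: boxQ_def axis_def)

lemma point_mass_diff_Vsub:
  assumes "M > 0" "q \<in> boxQ l" "q' \<in> boxQ l" "tcong M z (q + x)" "tcong M z' (q' + x)"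
  shows "(\<lambda>y. point_mass M z c y - point_mass M z' c y) \<in> Vsub M l x"
  unfolding Vsub_def
proof (intro CollectI conjI allI impI point_mass_diff_XN[OF assms(1)])
  fix y assume "\<not> (\<exists>q\<in>boxQ l. tcong M y (q + x))"
  then have "\<not> tcong M y z" "\<not> tcong M y z'"
    using assms(2-5) tcong_trans by blast+
  then show "point_mass M z c y - point_mass M z' c y = 0"
    by (simp add: point_mass_def)
qed

lemma point_mass_step_Vsub:
  assumes "M > 0" "3 \<le> l"
  shows "(\<lambda>y. point_mass M (z + axis j 1) c y - point_mass M z c y) \<in> Vsub M l (torus_rep M (z - 1))"
proof -
  have shifted: "tcong M (z - 1 + q) (q + torus_rep M (z - 1))" for q
    using tcong_add_right[OF tcong_torus_rep, of M "z - 1" q] by (simp add: add.commute)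
  show ?thesis
    using shifted[of "1 + axis j 1"] shifted[of 1] assms(2)
    by (intro point_mass_diff_Vsub[OF assms(1) one_plus_axis_in_boxQ[OF assms(2)] one_in_boxQ])
      (simp_all add: algebra_simps)
qed

lemma Vsub_lincomb:
  assumes "finite I" "\<And>i. i \<in> I \<Longrightarrow> g i \<in> Vsub M l x"
  shows "(\<lambda>y. \<Sum>i\<in>I. a i *\<^sub>R g i y) \<in> Vsub M l x"
  unfolding Vsub_def
proof (intro CollectI conjI allI impI XN_lincomb[OF assms(1)])
  show "g i \<in> XN M" if "i \<in> I" for i
    using assms(2)[OF that] by (simp add: Vsub_def)
  fix y assume "\<not> (\<exists>q\<in>boxQ l. tcong M y (q + x))"
  then show "(\<Sum>i\<in>I. a i *\<^sub>R g i y) = 0"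
    using assms(2) by (simp add: Vsub_def)
qed

definition local_sites :: "nat \<Rightarrow> nat \<Rightarrow> int^'d \<Rightarrow> (int^'d) set" where
  "local_sites M l x = {z\<in>torus M. \<exists>q\<in>boxQ l. tcong M z (q + x)}"

lemma finite_local_sites: "finite (local_sites M l x)"
  by (rule finite_subset[OF _ finite_torus[of M]]) (auto simp: local_sites_def)

text \<open>Subtracting a fixed unit mass inside \<open>Q + x\<close> restores the zero mean.\<close>

definition local_generator :: "nat \<Rightarrow> int^'d \<Rightarrow> (int^'d) \<times> 'm \<Rightarrow> int^'d \<Rightarrow> real^'m" where
  "local_generator M x p =
    (\<lambda>y. point_mass M (fst p) (snd p) y - point_mass M (torus_rep M (1 + x)) (snd p) y)"

lemma Vsub_eq_fun_span:
  assumes "M > 0" "2 \<le> l"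
  shows "Vsub M l x = fun_span (local_sites M l x \<times> UNIV) (local_generator M x)"
proof
  show "Vsub M l x \<subseteq> fun_span (local_sites M l x \<times> UNIV) (local_generator M x)"
  proof
    fix \<psi> assume \<psi>: "\<psi> \<in> Vsub M l x"
    have "\<psi> = (\<lambda>y. \<Sum>p\<in>local_sites M l x \<times> UNIV. (\<psi> (fst p) $ snd p) *\<^sub>R local_generator M x p y)"
      unfolding local_generator_def
      by (rule XN_point_mass_expansion) (use \<psi> assms(1) in \<open>auto simp: Vsub_def local_sites_def\<close>)
    then show "\<psi> \<in> fun_span (local_sites M l x \<times> UNIV) (local_generator M x)"
      by (auto simp: fun_span_def)
  qed
next
  have "local_generator M x p \<in> Vsub M l x" if p: "p \<in> local_sites M l x \<times> UNIV" for p
  proof -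
    obtain q where "q \<in> boxQ l" "tcong M (fst p) (q + x)"
      using p by (auto simp: local_sites_def)
    then show ?thesis unfolding local_generator_def
      by (rule point_mass_diff_Vsub[OF assms(1) _ one_in_boxQ[OF assms(2)] _ tcong_sym[OF tcong_torus_rep]])
  qed
  then show "fun_span (local_sites M l x \<times> UNIV) (local_generator M x) \<subseteq> Vsub M l x"
    using finite_cartesian_product[OF finite_local_sites finite_class.finite_UNIV]
    by (auto simp: fun_span_def intro!: Vsub_lincomb)
qed

context coercive_form
begin

lemma symmetric_bilinear_energy: "symmetric_bilinear_fun_form (energy M)"
  by unfold_locales (simp_all add: energy_add_left energy_scaleR_left energy_commute[of M])

lemma is_orth_proj_Pi:
  assumes "M > 0" "2 \<le> l"
  shows "is_orth_proj (energy M) (Vsub M l x) \<phi> (Pi A M l x \<phi>)"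
proof -
  interpret symmetric_bilinear_fun_form "energy M" by (rule symmetric_bilinear_energy)
  have definite: "v = (\<lambda>_. 0)" if "v \<in> Vsub M l x" "energy M v v = 0" for v
    using that energy_eq_0_imp_eq_0[OF _ assms(1)] by (simp add: Vsub_def)
  have "\<exists>\<psi>. is_orth_proj (energy M) (Vsub M l x) \<phi> \<psi>"
    unfolding Vsub_eq_fun_span[OF assms]
    by (rule is_orth_proj_exists) (use definite Vsub_eq_fun_span[OF assms]
        finite_cartesian_product[OF finite_local_sites finite_class.finite_UNIV] in auto)
  moreover have "\<psi>1 = \<psi>2"
    if "is_orth_proj (energy M) (Vsub M l x) \<phi> \<psi>1" "is_orth_proj (energy M) (Vsub M l x) \<phi> \<psi>2"
    for \<psi>1 \<psi>2
  proof (rule is_orth_proj_unique[OF _ definite that])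
    show "(\<lambda>y. f y - g y) \<in> Vsub M l x" if "f \<in> Vsub M l x" "g \<in> Vsub M l x" for f g
      using Vsub_lincomb[of "{True, False}" "\<lambda>b. if b then f else g" M l x "\<lambda>b. if b then 1 else -1"]
        that by simp
  qed
  ultimately have "\<exists>!\<psi>. is_orth_proj (energy M) (Vsub M l x) \<phi> \<psi>" by blast
  then show ?thesis unfolding Pi_def is_orth_proj_def[symmetric] by (rule theI')
qed

lemma Pi_Vsub: "M > 0 \<Longrightarrow> 2 \<le> l \<Longrightarrow> Pi A M l x \<phi> \<in> Vsub M l x"
  using is_orth_proj_Pi by (simp add: is_orth_proj_def)

lemma energy_Pi_residual_orth:
  "M > 0 \<Longrightarrow> 2 \<le> l \<Longrightarrow> \<eta> \<in> Vsub M l x \<Longrightarrow> energy M (\<lambda>y. \<phi> y - Pi A M l x \<phi> y) \<eta> = 0"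
  using is_orth_proj_Pi by (simp add: is_orth_proj_def)

end

lemma boxQ_component_mod_ne_0:
  assumes "q \<in> boxQ l" "l \<le> M" shows "q$k mod int M \<noteq> 0"
proof -
  have "1 \<le> q$k" "q$k \<le> int l - 1" "int l \<le> int M" using assms by (simp_all add: boxQ_def)
  then show ?thesis by simp
qed

lemma boxQ_subset_boxQm: "boxQ l \<subseteq> boxQm l"
  unfolding boxQ_def boxQm_def by (smt (verit) Collect_mono)

lemma boxQm_tcong_eq:
  assumes "q1 \<in> boxQm l" "q2 \<in> boxQm l" "l \<le> M" "tcong M q1 q2"
  shows "q1 = q2"
proof -
  have "q1$i = q2$i" for i
  proof -
    have "0 \<le> q1$i" "q1$i \<le> int l - 1" "0 \<le> q2$i" "q2$i \<le> int l - 1" "int l \<le> int M"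
      using assms(1-3) by (simp_all add: boxQm_def)
    moreover have "q1$i mod int M = q2$i mod int M" using assms(4) by (simp add: tcong_def)
    ultimately show ?thesis by simp
  qed
  then show ?thesis by (simp add: vec_eq_iff)
qed

lemma inj_on_torus_rep_shifted_boxQm:
  "l \<le> M \<Longrightarrow> inj_on (torus_rep M) ((\<lambda>q. q + x) ` boxQm l)"
  using boxQm_tcong_eq by (auto simp: inj_on_def torus_rep_eq_iff)

lemma Vsub_vanishes_on_face:
  assumes "\<psi> \<in> Vsub M l x" "l \<le> M" "(y - x)$k mod int M = 0"
  shows "\<psi> y = 0"
proof (rule ccontr)
  assume "\<psi> y \<noteq> 0"
  then obtain q where q: "q \<in> boxQ l" "tcong M y (q + x)"
    using assms(1) by (auto simp: Vsub_def)
  then have "tcong M (y - x) q"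
    using tcong_add_right[of M y "q + x" "- x"] by simp
  then have "q$k mod int M = 0" using assms(3) by (simp add: tcong_def)
  then show False using boxQ_component_mod_ne_0[OF q(1) assms(2), of k] by simp
qed

lemma grad_Vsub_support:
  assumes "\<psi> \<in> Vsub M l x" "grad \<psi> z \<noteq> 0"
  shows "\<exists>q\<in>boxQm l. tcong M z (q + x)"
proof -
  obtain j where "\<psi> (z + axis j 1) \<noteq> \<psi> z"
    using assms(2) grad_column_eq_0_iff[of \<psi> z] by (metis vec_eq_iff zero_index)
  then consider "\<psi> z \<noteq> 0" | "\<psi> (z + axis j 1) \<noteq> 0" by fastforce
  then show ?thesis
  proof cases
    case 1
    then obtain q where "q \<in> boxQ l" "tcong M z (q + x)" using assms(1) by (auto simp: Vsub_def)
    then show ?thesis using boxQ_subset_boxQm by blast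
  next
    case 2
    then obtain q where q: "q \<in> boxQ l" "tcong M (z + axis j 1) (q + x)"
      using assms(1) by (auto simp: Vsub_def)
    have "tcong M z (q - axis j 1 + x)"
      using q(2) tcong_add_right[of M "z + axis j 1" "q + x" "- axis j 1"]
      by (simp add: algebra_simps)
    moreover have "q - axis j 1 \<in> boxQm l"
    proof -
      have qb: "1 \<le> q$i \<and> q$i \<le> int l - 1" for i using q(1) by (simp add: boxQ_def)
      have "0 \<le> (q - axis j 1)$i \<and> (q - axis j 1)$i \<le> int l - 1" for i
        using qb[of i] by (auto simp: axis_def)
      then show ?thesis by (simp add: boxQm_def)
    qed
    ultimately show ?thesis by blast
  qed
qed

lemma exists_other_index:
  assumes "CARD('d) \<ge> 2" shows "\<exists>k::'d. k \<noteq> j"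
proof (rule ccontr)
  assume "\<not> (\<exists>k::'d. k \<noteq> j)"
  then have "(UNIV :: 'd set) = {j}" by auto
  then have "CARD('d) = card {j}" by (rule arg_cong)
  then show False using assms by simp
qed

section \<open>The local projections and their average\<close>

context coercive_form
begin

abbreviation local_energy :: "nat \<Rightarrow> int^'d \<Rightarrow> (int^'d \<Rightarrow> real^'m) \<Rightarrow> real" where
  "local_energy l x \<phi> \<equiv> (\<Sum>y\<in>(\<lambda>q. q + x) ` boxQm l. inner (A (grad \<phi> y)) (grad \<phi> y))"

text \<open>Gradients of functions supported in \<open>Q + x\<close> live in \<open>Q\<^sub>- + x\<close>.\<close>

lemma energy_Vsub_eq_local_sum:
  assumes "\<psi> \<in> Vsub M l x" "lattice_periodic M h" "M > 0" "l \<le> M"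
  shows "energy M \<psi> h = (\<Sum>y\<in>(\<lambda>q. q + x) ` boxQm l. inner (A (grad \<psi> y)) (grad h y))"
  unfolding eform_def
proof (rule sum_torus_eq_sum_representatives)
  show "lattice_periodic M (\<lambda>z. inner (A (grad \<psi> z)) (grad h z))"
    using assms(1,2) XN_lattice_periodic
    by (intro lattice_periodic_energy_density) (auto simp: Vsub_def)
  show "\<exists>y\<in>(\<lambda>q. q + x) ` boxQm l. tcong M z y"
    if "inner (A (grad \<psi> z)) (grad h z) \<noteq> 0" for z
  proof -
    have "grad \<psi> z \<noteq> 0" using that linear_0[OF linear] by auto
    then show ?thesis using grad_Vsub_support[OF assms(1)] by blast
  qed
qed (use assms inj_on_torus_rep_shifted_boxQm in auto)

lemma energy_Pi_self:
  assumes "M > 0" "2 \<le> l"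
  shows "energy M (Pi A M l x \<phi>) \<phi> = energy M (Pi A M l x \<phi>) (Pi A M l x \<phi>)"
  using energy_Pi_residual_orth[OF assms Pi_Vsub[OF assms]]
  by (simp add: energy_diff_left energy_commute[of M \<phi>])

lemma energy_Pi_nonneg: "M > 0 \<Longrightarrow> 2 \<le> l \<Longrightarrow> 0 \<le> energy M (Pi A M l x \<phi>) \<phi>"
  using energy_Pi_self energy_nonneg by simp

lemma local_energy_residual:
  fixes x :: "int^'d"
  assumes "M > 0" "2 \<le> l" "l \<le> M" "\<phi> \<in> XN M"
  defines "P \<equiv> Pi A M l x \<phi>"
  shows "local_energy l x (\<lambda>y. \<phi> y - P y) = local_energy l x \<phi> - energy M P \<phi>"
proof -
  have PV: "P \<in> Vsub M l x" unfolding P_def by (rule Pi_Vsub[OF assms(1,2)])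
  have "local_energy l x (\<lambda>y. \<phi> y - P y)
     = local_energy l x \<phi> - 2 * (\<Sum>y\<in>(\<lambda>q. q + x) ` boxQm l. inner (A (grad P y)) (grad \<phi> y))
       + local_energy l x P"
    by (simp add: grad_diff inner_A_diff sum_subtractf sum.distrib sum_distrib_left)
  also have "(\<Sum>y\<in>(\<lambda>q. q + x) ` boxQm l. inner (A (grad P y)) (grad \<phi> y)) = energy M P \<phi>"
    using energy_Vsub_eq_local_sum[OF PV XN_lattice_periodic[OF assms(4)] assms(1,3)] by simp
  also have "local_energy l x P = energy M P P"
    using energy_Vsub_eq_local_sum[OF PV _ assms(1,3)] PV
    by (simp add: Vsub_def XN_lattice_periodic)
  finally show ?thesis using energy_Pi_self[OF assms(1,2)] by (simp add: P_def)
qed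

lemma local_energy_nonneg: "0 \<le> local_energy l x \<phi>"
  by (rule sum_nonneg) (rule inner_A_nonneg)

lemma energy_Pi_le_local_energy:
  assumes "M > 0" "2 \<le> l" "l \<le> M" "\<phi> \<in> XN M"
  shows "energy M (Pi A M l x \<phi>) \<phi> \<le> local_energy l x \<phi>"
proof -
  have "0 \<le> local_energy l x (\<lambda>y. \<phi> y - Pi A M l x \<phi> y)" by (rule local_energy_nonneg)
  then show ?thesis using local_energy_residual[OF assms, of x] by linarith
qed

lemma energy_Top_left:
  "energy M (Top A M l \<psi>) h = (\<Sum>x\<in>torus M. energy M (Pi A M l x \<psi>) h) / real l ^ CARD('d)"
  unfolding Top_def scaleR_sum_right energy_lincomb_left by (simp add: sum_divide_distrib)

lemma Top_XN: "M > 0 \<Longrightarrow> 2 \<le> l \<Longrightarrow> Top A M l \<psi> \<in> XN M"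
  unfolding Top_def scaleR_sum_right
  by (rule XN_lincomb[OF finite_torus]) (use Pi_Vsub in \<open>simp add: Vsub_def\<close>)

text \<open>Each bond lies in exactly \<open>l\<^sup>d\<close> of the translated boxes \<open>Q\<^sub>- + x\<close>.\<close>

lemma sum_local_energy:
  assumes "M > 0" "lattice_periodic M \<psi>"
  shows "(\<Sum>x\<in>torus M. local_energy l x \<psi>) = real l ^ CARD('d) * energy M \<psi> \<psi>"
proof -
  have per: "lattice_periodic M (\<lambda>z. inner (A (grad \<psi> z)) (grad \<psi> z))"
    using lattice_periodic_energy_density[OF assms(2) assms(2)] .
  have "(\<Sum>x\<in>torus M. local_energy l x \<psi>)
      = (\<Sum>x\<in>torus M. \<Sum>q\<in>boxQm l. inner (A (grad \<psi> (x + q))) (grad \<psi> (x + q)))"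
    by (simp add: sum.reindex inj_on_def add.commute)
  also have "\<dots> = (\<Sum>q\<in>boxQm l. \<Sum>x\<in>torus M. inner (A (grad \<psi> (x + q))) (grad \<psi> (x + q)))"
    by (rule sum.swap)
  also have "\<dots> = (\<Sum>q\<in>(boxQm l :: (int^'d) set). energy M \<psi> \<psi>)"
    unfolding eform_def using sum_torus_translate[OF per assms(1)] by simp
  also have "\<dots> = real l ^ CARD('d) * energy M \<psi> \<psi>" by (simp add: card_boxQm)
  finally show ?thesis .
qed

lemma energy_Top_bounds:
  assumes "M > 0" "2 \<le> l" "l \<le> M" "\<phi> \<in> XN M"
  shows "0 \<le> energy M (Top A M l \<phi>) \<phi>" "energy M (Top A M l \<phi>) \<phi> \<le> energy M \<phi> \<phi>"
proof -
  have "(\<Sum>x\<in>torus M. energy M (Pi A M l x \<phi>) \<phi>) \<le> (\<Sum>x\<in>torus M. local_energy l x \<phi>)"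
    by (rule sum_mono) (rule energy_Pi_le_local_energy[OF assms])
  also have "\<dots> = real l ^ CARD('d) * energy M \<phi> \<phi>"
    by (rule sum_local_energy[OF assms(1) XN_lattice_periodic[OF assms(4)]])
  finally show "energy M (Top A M l \<phi>) \<phi> \<le> energy M \<phi> \<phi>"
    using assms(2) by (simp add: energy_Top_left divide_le_eq mult.commute)
  show "0 \<le> energy M (Top A M l \<phi>) \<phi>"
    unfolding energy_Top_left using energy_Pi_nonneg[OF assms(1,2)] by (simp add: sum_nonneg)
qed

text \<open>A function orthogonal to all local spaces pairs equally with unit masses at neighbouring
  sites, hence with all unit masses; expanding it in unit masses shows that its energy
  vanishes.\<close>

lemma orthogonal_to_local_spaces_imp_zero:
  fixes \<phi> :: "int^'d \<Rightarrow> real^'m"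
  assumes "\<phi> \<in> XN M" "M > 0" "3 \<le> l"
    and orth: "\<And>x \<eta>. x \<in> torus M \<Longrightarrow> \<eta> \<in> Vsub M l x \<Longrightarrow> energy M \<phi> \<eta> = 0"
  shows "\<phi> = (\<lambda>_. 0)"
proof -
  define h where "h c z = energy M \<phi> (point_mass M z c)" for c z
  have "h c (z + axis j 1) = h c z" for c z j
    using orth[OF torus_rep_in_torus[OF assms(2)] point_mass_step_Vsub[OF assms(2,3)]]
    by (simp add: h_def energy_diff_right)
  then have const: "h c z = h c 0" for c z by (rule shift_invariant_const)
  have "\<phi> = (\<lambda>y. \<Sum>p\<in>torus M \<times> UNIV.
      (\<phi> (fst p) $ snd p) *\<^sub>R (point_mass M (fst p) (snd p) y - point_mass M 0 (snd p) y))"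
    by (rule XN_point_mass_expansion[OF assms(1,2)]) auto
  then have "energy M \<phi> \<phi> = energy M \<phi> (\<lambda>y. \<Sum>p\<in>torus M \<times> UNIV.
      (\<phi> (fst p) $ snd p) *\<^sub>R (point_mass M (fst p) (snd p) y - point_mass M 0 (snd p) y))"
    by (rule arg_cong)
  also have "\<dots> = (\<Sum>p\<in>torus M \<times> UNIV.
      (\<phi> (fst p) $ snd p) * energy M \<phi> (\<lambda>y. point_mass M (fst p) (snd p) y - point_mass M 0 (snd p) y))"
    by (rule energy_lincomb_right)
  also have "\<dots> = 0"
  proof (rule sum.neutral, rule ballI)
    fix p :: "(int^'d) \<times> 'm"
    have "energy M \<phi> (\<lambda>y. point_mass M (fst p) (snd p) y - point_mass M 0 (snd p) y)
        = h (snd p) (fst p) - h (snd p) 0"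
      by (simp add: h_def energy_diff_right)
    then show "(\<phi> (fst p) $ snd p) *
        energy M \<phi> (\<lambda>y. point_mass M (fst p) (snd p) y - point_mass M 0 (snd p) y) = 0"
      using const[of "snd p" "fst p"] by simp
  qed
  finally show ?thesis by (rule energy_eq_0_imp_eq_0[OF assms(1,2)])
qed

lemma energy_Top_pos:
  assumes "M > 0" "3 \<le> l" "l \<le> M" "\<phi> \<in> XN M" "\<phi> \<noteq> (\<lambda>_. 0)"
  shows "0 < energy M (Top A M l \<phi>) \<phi>"
proof (rule ccontr)
  have l: "2 \<le> l" using assms(2) by simp
  assume "\<not> 0 < energy M (Top A M l \<phi>) \<phi>"
  then have "(\<Sum>x\<in>torus M. energy M (Pi A M l x \<phi>) \<phi>) = 0"
    using energy_Top_bounds(1)[OF assms(1) l assms(3,4)] l by (simp add: energy_Top_left)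
  then have "energy M (Pi A M l x \<phi>) \<phi> = 0" if "x \<in> torus M" for x
    using that energy_Pi_nonneg[OF assms(1) l] by (simp add: sum_nonneg_eq_0_iff)
  then have Pi_zero: "Pi A M l x \<phi> = (\<lambda>_. 0)" if "x \<in> torus M" for x
    using that energy_Pi_self[OF assms(1) l] Pi_Vsub[OF assms(1) l]
    by (intro energy_eq_0_imp_eq_0[OF _ assms(1)]) (auto simp: Vsub_def)
  then have "energy M \<phi> \<eta> = 0" if "x \<in> torus M" "\<eta> \<in> Vsub M l x" for x \<eta>
    using energy_Pi_residual_orth[OF assms(1) l that(2), of \<phi>] Pi_zero[OF that(1)] by simp
  then have "\<phi> = (\<lambda>_. 0)"
    by (rule orthogonal_to_local_spaces_imp_zero[OF assms(4,1,2)])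
  then show False using assms(5) by blast
qed

text \<open>Equality in the local bound forces \<open>\<nabla>\<phi>(x) = \<nabla>(\<Pi>\<^sub>x\<phi>)(x)\<close>; but \<open>x\<close> and
  \<open>x + e\<^sub>j\<close> lie on a face of \<open>Q + x\<close> transversal to another direction \<open>e\<^sub>k\<close>, where
  \<open>\<Pi>\<^sub>x\<phi>\<close> vanishes. This is where \<open>d \<ge> 2\<close> enters.\<close>

lemma local_energy_eq_imp_step_eq:
  assumes "M > 0" "2 \<le> l" "l \<le> M" "\<phi> \<in> XN M" "CARD('d) \<ge> 2"
    and eq: "local_energy l x \<phi> = energy M (Pi A M l x \<phi>) \<phi>"
  shows "\<phi> (x + axis j 1) = \<phi> x"
proof -
  let ?P = "Pi A M l x \<phi>"
  have "local_energy l x (\<lambda>y. \<phi> y - ?P y) = 0"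
    using local_energy_residual[OF assms(1-4)] eq by simp
  moreover have "0 \<in> boxQm l" using assms(2) by (simp add: boxQm_def)
  ultimately have "inner (A (grad (\<lambda>y. \<phi> y - ?P y) x)) (grad (\<lambda>y. \<phi> y - ?P y) x) = 0"
    by (subst (asm) sum_nonneg_eq_0_iff) (auto simp: inner_A_nonneg dest: bspec[where x=0])
  then have grad_eq: "grad \<phi> x = grad ?P x"
    by (simp add: inner_A_eq_0_iff grad_diff)
  obtain k :: 'd where k: "k \<noteq> j" using exists_other_index[OF assms(5)] by blast
  note vanish = Vsub_vanishes_on_face[OF Pi_Vsub[OF assms(1,2)] assms(3), of _ x k]
  have "?P (x + axis j 1) = ?P x"
    using vanish[of x] vanish[of "x + axis j 1"] k by (simp add: axis_def)
  then have "\<forall>a. grad \<phi> x $ a $ j = 0"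
    unfolding grad_eq by (rule iffD2[OF grad_column_eq_0_iff])
  then show ?thesis by (rule iffD1[OF grad_column_eq_0_iff])
qed

lemma energy_Top_less:
  assumes "M > 0" "2 \<le> l" "l \<le> M" "\<phi> \<in> XN M" "\<phi> \<noteq> (\<lambda>_. 0)" "CARD('d) \<ge> 2"
  shows "energy M (Top A M l \<phi>) \<phi> < energy M \<phi> \<phi>"
proof (rule ccontr)
  assume "\<not> energy M (Top A M l \<phi>) \<phi> < energy M \<phi> \<phi>"
  then have "energy M (Top A M l \<phi>) \<phi> = energy M \<phi> \<phi>"
    using energy_Top_bounds(2)[OF assms(1-4)] by simp
  then have "(\<Sum>x\<in>torus M. local_energy l x \<phi> - energy M (Pi A M l x \<phi>) \<phi>) = 0"
    using assms(2) sum_local_energy[OF assms(1) XN_lattice_periodic[OF assms(4)], of l]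
    by (simp add: energy_Top_left sum_subtractf field_simps)
  then have "local_energy l x \<phi> = energy M (Pi A M l x \<phi>) \<phi>" if "x \<in> torus M" for x
    using that energy_Pi_le_local_energy[OF assms(1-4)] by (simp add: sum_nonneg_eq_0_iff)
  then have "\<phi> (x + axis j 1) = \<phi> x" if "x \<in> torus M" for x j
    using that by (intro local_energy_eq_imp_step_eq[OF assms(1-4,6)]) simp
  then have "\<phi> = (\<lambda>_. 0)" by (rule XN_step_const_eq_0[OF assms(4,1)])
  then show False using assms(5) by blast
qed

text \<open>With \<open>\<Pi>\<^sub>x\<phi>\<close> and \<open>\<Pi>\<^sub>x(\<T>\<phi>)\<close> in the same local space,
  \<open>(\<Pi>\<^sub>x\<phi>, \<T>\<phi>)\<^sub>+ = (\<Pi>\<^sub>x\<phi>, \<Pi>\<^sub>x\<T>\<phi>)\<^sub>+\<close> is bounded by the arithmetic mean of the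
  two projected energies; averaging over \<open>x\<close> and applying (ii) to \<open>\<T>\<phi>\<close> gives (iii).\<close>

lemma energy_Pi_Top_le:
  assumes "M > 0" "2 \<le> l"
  shows "energy M (Pi A M l x \<phi>) (Top A M l \<phi>)
      \<le> (energy M (Pi A M l x \<phi>) \<phi> + energy M (Pi A M l x (Top A M l \<phi>)) (Top A M l \<phi>)) / 2"
proof -
  let ?a = "Pi A M l x \<phi>" and ?b = "Pi A M l x (Top A M l \<phi>)"
  have "energy M (\<lambda>y. Top A M l \<phi> y - ?b y) ?a = 0"
    by (rule energy_Pi_residual_orth[OF assms Pi_Vsub[OF assms]])
  then have ab: "energy M ?a (Top A M l \<phi>) = energy M ?a ?b"
    by (simp add: energy_diff_left energy_commute[of M ?a])
  have "0 \<le> energy M (\<lambda>y. ?a y - ?b y) (\<lambda>y. ?a y - ?b y)" by (rule energy_nonneg)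
  then show ?thesis
    using ab energy_Pi_self[OF assms, of x \<phi>] energy_Pi_self[OF assms, of x "Top A M l \<phi>"]
    by (simp add: energy_diff_self)
qed

lemma energy_Top_Top_le:
  assumes "M > 0" "2 \<le> l" "l \<le> M" "\<phi> \<in> XN M"
  shows "energy M (Top A M l \<phi>) (Top A M l \<phi>) \<le> energy M (Top A M l \<phi>) \<phi>"
proof -
  let ?T = "Top A M l \<phi>"
  have "energy M ?T ?T
      \<le> (\<Sum>x\<in>torus M. (energy M (Pi A M l x \<phi>) \<phi> + energy M (Pi A M l x ?T) ?T) / 2)
          / real l ^ CARD('d)"
    unfolding energy_Top_left using assms(2)
    by (intro divide_right_mono sum_mono energy_Pi_Top_le[OF assms(1,2)]) simp
  also have "\<dots> = (energy M ?T \<phi> + energy M (Top A M l ?T) ?T) / 2"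
    by (simp add: energy_Top_left sum.distrib add_divide_distrib sum_divide_distrib[symmetric])
  also have "\<dots> \<le> (energy M ?T \<phi> + energy M ?T ?T) / 2"
    using energy_Top_bounds(2)[OF assms(1-3) Top_XN[OF assms(1,2)]] by simp
  finally show ?thesis by simp
qed

end

theorem lemma3p4:
  fixes A :: "real^'d^'m \<Rightarrow> real^'d^'m"
    and L N l :: nat and c0 :: real
    and \<phi> :: "int^'d \<Rightarrow> real^'m" and x :: "int^'d"
  assumes "CARD('d) \<ge> 2"
    and "L \<ge> 3" and "odd L" and "N \<ge> 1"
    and "l \<ge> 3" and "l - 1 < L ^ N"
    and "linear A"
    and "\<And>F G. inner (A F) G = inner F (A G)"
    and "c0 > 0" and "\<And>F. inner (A F) F \<ge> c0 * (norm F)\<^sup>2"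
    and "\<phi> \<in> XN (L ^ N)" and "x \<in> torus (L ^ N)"
  shows "(0 \<le> eform A (L ^ N) (Pi A (L ^ N) l x \<phi>) \<phi>
         \<and> eform A (L ^ N) (Pi A (L ^ N) l x \<phi>) \<phi>
             \<le> (\<Sum>y\<in>(\<lambda>q. q + x) ` boxQm l. inner (A (grad \<phi> y)) (grad \<phi> y)))
    \<and> (0 \<le> eform A (L ^ N) (Top A (L ^ N) l \<phi>) \<phi>
         \<and> eform A (L ^ N) (Top A (L ^ N) l \<phi>) \<phi> \<le> eform A (L ^ N) \<phi> \<phi>)
    \<and> (\<phi> \<noteq> (\<lambda>_. 0) \<longrightarrow> 0 < eform A (L ^ N) (Top A (L ^ N) l \<phi>) \<phi>
         \<and> eform A (L ^ N) (Top A (L ^ N) l \<phi>) \<phi> < eform A (L ^ N) \<phi> \<phi>)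
    \<and> (eform A (L ^ N) (Top A (L ^ N) l \<phi>) (Top A (L ^ N) l \<phi>)
         \<le> eform A (L ^ N) (Top A (L ^ N) l \<phi>) \<phi>)"
proof -
  interpret coercive_form A c0 using assms(7-10) by (simp add: coercive_form_def)
  have M: "L ^ N > 0" using assms(2) by simp
  have l: "2 \<le> l" "3 \<le> l" "l \<le> L ^ N" using assms(5,6) by linarith+
  note \<phi> = assms(11)
  show ?thesis
    using energy_Pi_nonneg[OF M l(1)] energy_Pi_le_local_energy[OF M l(1,3) \<phi>]
      energy_Top_bounds[OF M l(1,3) \<phi>] energy_Top_pos[OF M l(2,3) \<phi>]
      energy_Top_less[OF M l(1,3) \<phi> _ assms(1)] energy_Top_Top_le[OF M l(1,3) \<phi>]
    by blast
qed

end
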